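(* Assume $0<\rho_{\ell-1,\ell}<1$ for $\ell=1,\dots,L$. For every $k\ge1$ and every $\ell=2,\dots,L+1$, $$q_{k,\ell}=\alpha_{k,\ell}\cdot\prod_{j=1}^{\ell-1}\Lambda_{k,j}\cdot\prod_{m=0}^{k-2}(1+\zeta_{m,\ell}),$$ where $\Lambda_{k,j}=\prod_{m=1}^kL_{m,j}$, $$\alpha_{k,\ell}=\Big(\frac{1-\rho_{\ell-1,\ell}}{1-\rho}\Big)^k\prod_{j=1}^{\ell-2}\rho_{j,j+1}\cdot\sum_{j=0}^{\ell-1}\frac{1-\rho_{j,j+1}}{1-\rho},$$ $$\zeta_{m,\ell}=\frac{1}{(1-\rho_{\ell-1,\ell})\prod_{j=1}^{\ell-1}L_{m+1,j}}\cdot\frac{\sum_{j=1}^{\ell-1}q_{m,j}\,w_j^\ell\,C_{m+1,j,\ell}}{\sum_{j=1}^{\ell}q_{m,j}\,w_j^\ell},$$ $$B_{m,n,\ell}=\sum_{p=n-1}^{\ell-1}(1-\rho_{p,p+1})\prod_{j=1}^pL_{m,j},\qquad C_{m,n,\ell}=B_{m,n,\ell}-(1-\rho_{\ell-1,\ell})\prod_{j=1}^{\ell-1}L_{m,j}\quad(1\le n\le\ell),$$ and an empty product equals $1$.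
   Context: Model. Fix an integer $L\ge1$, $\rho\in(0,1)$ and $\rho_{\ell-1,\ell}$ ($\ell=2,\dots,L$); put $\rho_{0,1}=\rho$ and $\rho_{L,L+1}=0$. Change-points: $P(\Gamma_1=m)=\rho(1-\rho)^m$, $m\ge0$; $\Gamma_\ell=\Gamma_{\ell-1}+G_\ell$ with independent $G_\ell$, $P(G_\ell=m)=\rho_{\ell-1,\ell}(1-\rho_{\ell-1,\ell})^m$. Observations $Z_{k,\ell}$ are conditionally independent given the change-points with density $f_0$ if $k<\Gamma_\ell$ and $f_1$ if $k\ge\Gamma_\ell$, where $f_0,f_1$ are mutually absolutely continuous. $L_{k,j}=f_1(Z_{k,j})/f_0(Z_{k,j})$. $q_{k,\ell}=p_{k,\ell}/(\rho p_{k,1})$, $\ell=1,\dots,L+1$, where $p_{k,\ell}=P(\Gamma_1\le k,\dots,\Gamma_{\ell-1}\le k,\Gamma_\ell>k,\dots,\Gamma_L>k\mid\mathbf Z_1,\dots,\mathbf Z_k)$. Weights $w_m^\ell=\prod_{j=m-1}^{\ell-2}\rho_{j,j+1}$ ($1\le m\le\ell$; equal to $1$ if $m=\ell$). These satisfy $q_{k,1}=1/\rho$, $q_{0,\ell}=\frac{(1-\rho_{\ell-1,\ell})\prod_{j=0}^{\ell-2}\rho_{j,j+1}}{\rho(1-\rho)}$ for $\ell\ge2$, and for $k\ge1$: $q_{k,\ell}=\frac{1-\rho_{\ell-1,\ell}}{1-\rho}\prod_{j=1}^{\ell-1}L_{k,j}\sum_{j=1}^{\ell}q_{k-1,j}w_j^\ell$.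 *)

theory Defs
  imports Complex_Main
begin

text \<open>Conventions: r j stands for rho_{j,j+1} (so r 0 = rho, r L = 0);
  Lr k j stands for the likelihood ratio L_{k,j}; q k l stands for q_{k,l}.\<close>

definition wt :: "(nat \<Rightarrow> real) \<Rightarrow> nat \<Rightarrow> nat \<Rightarrow> real" where
  "wt r m l = (\<Prod>j\<in>{m-1..<l-1}. r j)"

definition Lam :: "(nat \<Rightarrow> nat \<Rightarrow> real) \<Rightarrow> nat \<Rightarrow> nat \<Rightarrow> real" where
  "Lam Lr k j = (\<Prod>m\<in>{1..k}. Lr m j)"

definition alpha :: "(nat \<Rightarrow> real) \<Rightarrow> nat \<Rightarrow> nat \<Rightarrow> real" where
  "alpha r k l = ((1 - r (l-1)) / (1 - r 0)) ^ k * (\<Prod>j\<in>{1..l-2}. r j)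
      * (\<Sum>j\<in>{0..l-1}. (1 - r j) / (1 - r 0))"

definition Bc :: "(nat \<Rightarrow> real) \<Rightarrow> (nat \<Rightarrow> nat \<Rightarrow> real) \<Rightarrow> nat \<Rightarrow> nat \<Rightarrow> nat \<Rightarrow> real" where
  "Bc r Lr m n l = (\<Sum>p\<in>{n-1..l-1}. (1 - r p) * (\<Prod>j\<in>{1..p}. Lr m j))"

definition Cc :: "(nat \<Rightarrow> real) \<Rightarrow> (nat \<Rightarrow> nat \<Rightarrow> real) \<Rightarrow> nat \<Rightarrow> nat \<Rightarrow> nat \<Rightarrow> real" where
  "Cc r Lr m n l = Bc r Lr m n l - (1 - r (l-1)) * (\<Prod>j\<in>{1..l-1}. Lr m j)"

definition zeta :: "(nat \<Rightarrow> real) \<Rightarrow> (nat \<Rightarrow> nat \<Rightarrow> real) \<Rightarrow> (nat \<Rightarrow> nat \<Rightarrow> real)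
    \<Rightarrow> nat \<Rightarrow> nat \<Rightarrow> real" where
  "zeta r Lr q m l =
     1 / ((1 - r (l-1)) * (\<Prod>j\<in>{1..l-1}. Lr (m+1) j))
     * ((\<Sum>j\<in>{1..l-1}. q m j * wt r j l * Cc r Lr (m+1) j l)
        / (\<Sum>j\<in>{1..l}. q m j * wt r j l))"

end

theory Submission
  imports Defs
begin

(* Fix l with 2 <= l <= L+1 and write c = (1 - rho_{l-1,l})/(1 - rho), P_M = prod_{j<l} L_{M,j}
   and S_m = sum_{j=1}^{l} q_{m,j} w_j^l (the "weighted mass" of time m).  The recursion for q
   reads q_{k,l} = c P_k S_{k-1}, so everything reduces to the evolution of S_m:

   1. Applying the recursion to every summand of S_{m+1} and exchanging the two sums of the
      resulting triangular double sum gives S_{m+1} = (sum_j q_{m,j} w_j^l B_{m+1,j,l})/(1-rho).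
   2. Splitting B = C + (1 - rho_{l-1,l}) P_{m+1} (and C_{m+1,l,l} = 0) turns this into
      S_{m+1} = c P_{m+1} S_m (1 + zeta_{m,l}); positivity of q makes the division in zeta safe.
   3. Telescoping yields S_{k-1} = S_0 c^{k-1} prod_{M<k} P_M prod_{m<k-1} (1 + zeta_{m,l}),
      and S_0 is computed from the initial values, giving c^k S_0 = alpha_{k,l}. *)

definition gain :: "(nat \<Rightarrow> real) \<Rightarrow> nat \<Rightarrow> real" where
  "gain r l = (1 - r (l-1)) / (1 - r 0)"

definition lr_prod :: "(nat \<Rightarrow> nat \<Rightarrow> real) \<Rightarrow> nat \<Rightarrow> nat \<Rightarrow> real" where
  "lr_prod Lr M l = (\<Prod>j\<in>{1..l-1}. Lr M j)"

definition mass :: "(nat \<Rightarrow> real) \<Rightarrow> (nat \<Rightarrow> nat \<Rightarrow> real) \<Rightarrow> nat \<Rightarrow> nat \<Rightarrow> real" where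
  "mass r q m l = (\<Sum>j\<in>{1..l}. q m j * wt r j l)"

lemma sum_triangle_swap:
  fixes f :: "nat \<Rightarrow> nat \<Rightarrow> 'a::comm_monoid_add"
  shows "(\<Sum>i\<in>{1..n}. \<Sum>j\<in>{1..i}. f i j) = (\<Sum>j\<in>{1..n}. \<Sum>i\<in>{j..n}. f i j)"
proof -
  have "(\<Sum>i\<in>{1..n}. \<Sum>j\<in>{1..i}. f i j) = (\<Sum>i\<in>{1..n}. \<Sum>j\<in>{j. j \<in> {1..n} \<and> j \<le> i}. f i j)"
    by (intro sum.cong) auto
  also have "\<dots> = (\<Sum>j\<in>{1..n}. \<Sum>i\<in>{i. i \<in> {1..n} \<and> j \<le> i}. f i j)"
    by (rule sum.swap_restrict) auto
  also have "\<dots> = (\<Sum>j\<in>{1..n}. \<Sum>i\<in>{j..n}. f i j)"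
    by (intro sum.cong) auto
  finally show ?thesis .
qed

lemma wt_mult:
  assumes "1 \<le> j" "j \<le> i" "i \<le> l"
  shows "wt r j i * wt r i l = wt r j l"
  unfolding wt_def using assms by (intro prod.atLeastLessThan_concat) auto

lemma Bc_reindex:
  assumes "1 \<le> j" "1 \<le> l"
  shows "Bc r Lr M j l = (\<Sum>i\<in>{j..l}. (1 - r (i-1)) * (\<Prod>t\<in>{1..i-1}. Lr M t))"
proof -
  define g where "g i = (1 - r (i-1)) * (\<Prod>t\<in>{1..i-1}. Lr M t)" for i
  have "(\<Sum>i\<in>{j..l}. g i) = (\<Sum>i\<in>{Suc (j-1)..Suc (l-1)}. g i)"
    using assms by simp
  also have "\<dots> = (\<Sum>p\<in>{j-1..l-1}. g (Suc p))"
    by (rule sum.shift_bounds_cl_Suc_ivl)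
  finally show ?thesis unfolding Bc_def g_def by simp
qed

text \<open>The last summand of B is exactly what C removes, so C vanishes on the diagonal.\<close>

lemma Cc_diag:
  assumes "1 \<le> l"
  shows "Cc r Lr M l l = 0"
  unfolding Cc_def Bc_def by simp

locale change_point_posterior =
  fixes L :: nat and r :: "nat \<Rightarrow> real" and Lr :: "nat \<Rightarrow> nat \<Rightarrow> real"
    and q :: "nat \<Rightarrow> nat \<Rightarrow> real"
  assumes L_pos: "L \<ge> 1"
    and rho_bounds: "\<And>j. j < L \<Longrightarrow> 0 < r j \<and> r j < 1"
    and rho_last: "r L = 0"
    and Lr_pos: "\<And>k j. 1 \<le> k \<Longrightarrow> 1 \<le> j \<Longrightarrow> j \<le> L \<Longrightarrow> Lr k j > 0"
    and q_first: "\<And>k. q k 1 = 1 / r 0"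
    and q_init: "\<And>l. 2 \<le> l \<Longrightarrow> l \<le> L + 1 \<Longrightarrow>
        q 0 l = (1 - r (l-1)) * (\<Prod>j\<in>{0..l-2}. r j) / (r 0 * (1 - r 0))"
    and q_rec: "\<And>k l. 1 \<le> k \<Longrightarrow> 2 \<le> l \<Longrightarrow> l \<le> L + 1 \<Longrightarrow>
        q k l = (1 - r (l-1)) / (1 - r 0) * (\<Prod>j\<in>{1..l-1}. Lr k j)
                * (\<Sum>j\<in>{1..l}. q (k-1) j * wt r j l)"
begin

lemma r0_bounds: "0 < r 0" "r 0 < 1"
  using rho_bounds[of 0] L_pos by auto

lemma one_minus_r_pos: "j \<le> L \<Longrightarrow> 0 < 1 - r j"
  using rho_bounds[of j] rho_last by (cases "j = L") auto

lemma wt_pos: "i \<le> L + 1 \<Longrightarrow> 0 < wt r j i"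
  unfolding wt_def by (rule prod_pos) (use rho_bounds in auto)

lemma lr_prod_pos: "1 \<le> M \<Longrightarrow> l \<le> L + 1 \<Longrightarrow> 0 < lr_prod Lr M l"
  unfolding lr_prod_def by (rule prod_pos) (use Lr_pos in auto)

text \<open>All posterior ratios are positive; this is what makes zeta well defined.\<close>

lemma q_pos: "1 \<le> i \<Longrightarrow> i \<le> L + 1 \<Longrightarrow> 0 < q m i"
proof (induction m arbitrary: i)
  case 0
  show ?case
  proof (cases "i = 1")
    case True then show ?thesis using q_first r0_bounds by simp
  next
    case False
    have "0 < (\<Prod>j\<in>{0..i-2}. r j)"
      by (rule prod_pos) (use rho_bounds 0 False in auto)
    then show ?thesis
      using q_init[of i] False 0 one_minus_r_pos[of "i-1"] r0_bounds by simp
  qed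
next
  case (Suc m)
  show ?case
  proof (cases "i = 1")
    case True then show ?thesis using q_first r0_bounds by simp
  next
    case False
    have "0 < (\<Sum>j\<in>{1..i}. q m j * wt r j i)"
      by (rule sum_pos) (use Suc wt_pos in auto)
    moreover have "0 < (\<Prod>j\<in>{1..i-1}. Lr (Suc m) j)"
      using lr_prod_pos[of "Suc m" i] Suc.prems unfolding lr_prod_def by simp
    ultimately show ?thesis
      using q_rec[of "Suc m" i] False Suc.prems one_minus_r_pos[of "i-1"] r0_bounds by simp
  qed
qed

lemma mass_pos: "1 \<le> l \<Longrightarrow> l \<le> L + 1 \<Longrightarrow> 0 < mass r q m l"
  unfolding mass_def by (rule sum_pos) (use q_pos wt_pos in auto)

lemma q_rec_mass:
  "1 \<le> k \<Longrightarrow> 2 \<le> l \<Longrightarrow> l \<le> L + 1 \<Longrightarrow> q k l = gain r l * lr_prod Lr k l * mass r q (k-1) l"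
  using q_rec unfolding gain_def lr_prod_def mass_def by simp

text \<open>One summand of S_{m+1}, weighted towards stream l; the case i = 1 holds by q_{k,1} = 1/rho,
  so no case distinction is needed later.\<close>

lemma weighted_q_step:
  assumes "1 \<le> i" "i \<le> l" "l \<le> L + 1"
  shows "q (Suc m) i * wt r i l
    = (1 - r (i-1)) * (\<Prod>t\<in>{1..i-1}. Lr (Suc m) t) * (\<Sum>j\<in>{1..i}. q m j * wt r j l) / (1 - r 0)"
proof (cases "i = 1")
  case True
  then show ?thesis using q_first r0_bounds by simp
next
  case False
  have "q (Suc m) i * wt r i l = (1 - r (i-1)) / (1 - r 0) * (\<Prod>t\<in>{1..i-1}. Lr (Suc m) t)
      * ((\<Sum>j\<in>{1..i}. q m j * wt r j i) * wt r i l)"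
    using q_rec[of "Suc m" i] False assms by (simp add: mult.assoc)
  also have "(\<Sum>j\<in>{1..i}. q m j * wt r j i) * wt r i l = (\<Sum>j\<in>{1..i}. q m j * wt r j l)"
    unfolding sum_distrib_right
    by (rule sum.cong) (use wt_mult assms in \<open>auto simp: mult.assoc\<close>)
  finally show ?thesis by simp
qed

text \<open>Step 1: summing over i and exchanging the sums collects the likelihood-ratio factors of
  the streams i >= j into B_{m+1,j,l}.\<close>

lemma mass_step:
  assumes "1 \<le> l" "l \<le> L + 1"
  shows "mass r q (Suc m) l = (\<Sum>j\<in>{1..l}. q m j * wt r j l * Bc r Lr (Suc m) j l) / (1 - r 0)"
proof -
  define a where "a i = (1 - r (i-1)) * (\<Prod>t\<in>{1..i-1}. Lr (Suc m) t)" for i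
  define b where "b j = q m j * wt r j l" for j
  have "mass r q (Suc m) l = (\<Sum>i\<in>{1..l}. a i * (\<Sum>j\<in>{1..i}. b j) / (1 - r 0))"
    unfolding mass_def a_def b_def by (rule sum.cong) (use weighted_q_step assms in auto)
  also have "\<dots> = (\<Sum>i\<in>{1..l}. \<Sum>j\<in>{1..i}. a i * b j) / (1 - r 0)"
    by (simp add: sum_divide_distrib sum_distrib_left)
  also have "\<dots> = (\<Sum>j\<in>{1..l}. \<Sum>i\<in>{j..l}. a i * b j) / (1 - r 0)"
    by (simp only: sum_triangle_swap)
  also have "\<dots> = (\<Sum>j\<in>{1..l}. b j * (\<Sum>i\<in>{j..l}. a i)) / (1 - r 0)"
    by (simp add: sum_distrib_left mult_ac)
  also have "\<dots> = (\<Sum>j\<in>{1..l}. b j * Bc r Lr (Suc m) j l) / (1 - r 0)"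
    by (intro arg_cong[where f = "\<lambda>x. x / _"] sum.cong) (use Bc_reindex assms a_def in auto)
  finally show ?thesis unfolding b_def .
qed

lemma mass_step_zeta:
  assumes "2 \<le> l" "l \<le> L + 1"
  shows "mass r q (Suc m) l = gain r l * lr_prod Lr (Suc m) l * mass r q m l * (1 + zeta r Lr q m l)"
proof -
  define N where "N = (\<Sum>j\<in>{1..l-1}. q m j * wt r j l * Cc r Lr (Suc m) j l)"
  define D where "D = (1 - r (l-1)) * lr_prod Lr (Suc m) l * mass r q m l"
  have "(\<Sum>j\<in>{1..l}. q m j * wt r j l * Cc r Lr (Suc m) j l) = N"
  proof -
    have "{1..l} = insert l {1..l-1}" using assms by auto
    then show ?thesis unfolding N_def using assms Cc_diag[of l r Lr "Suc m"] by simp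
  qed
  moreover have "Bc r Lr (Suc m) j l = Cc r Lr (Suc m) j l + (1 - r (l-1)) * lr_prod Lr (Suc m) l" for j
    unfolding Cc_def lr_prod_def by simp
  ultimately have "(\<Sum>j\<in>{1..l}. q m j * wt r j l * Bc r Lr (Suc m) j l) = N + D"
    unfolding D_def mass_def by (simp add: distrib_left sum.distrib sum_distrib_left mult_ac)
  then have "mass r q (Suc m) l = (D + N) / (1 - r 0)"
    using mass_step[of l m] assms by simp
  moreover have "gain r l * lr_prod Lr (Suc m) l * mass r q m l = D / (1 - r 0)"
    unfolding gain_def D_def by simp
  moreover have "zeta r Lr q m l = N / D"
    unfolding zeta_def N_def D_def lr_prod_def mass_def by simp
  moreover have "0 < D"
    unfolding D_def using assms one_minus_r_pos[of "l-1"] lr_prod_pos[of "Suc m" l] mass_pos[of l m]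
    by simp
  ultimately show ?thesis by (simp add: field_simps)
qed

lemma mass_telescope:
  assumes "2 \<le> l" "l \<le> L + 1"
  shows "mass r q n l = mass r q 0 l * gain r l ^ n * (\<Prod>M\<in>{1..n}. lr_prod Lr M l)
                       * (\<Prod>m<n. 1 + zeta r Lr q m l)"
proof (induction n)
  case 0 then show ?case by simp
next
  case (Suc n)
  then show ?case
    using mass_step_zeta[OF assms, of n] by (simp add: prod.nat_ivl_Suc' mult_ac)
qed

text \<open>The initial mass: every summand of S_0 carries the common factor prod_{1<=j<=l-2} rho_{j,j+1}.\<close>

lemma mass_initial:
  assumes "2 \<le> l" "l \<le> L + 1"
  shows "mass r q 0 l = (\<Prod>j\<in>{1..l-2}. r j) * (\<Sum>j\<in>{0..l-1}. (1 - r j) / (1 - r 0))"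
proof -
  define R where "R = (\<Prod>j\<in>{1..l-2}. r j)"
  have R0: "(\<Prod>j\<in>{0..<l-1}. r j) = r 0 * R"
  proof -
    have "{0..<l-1} = insert 0 {1..l-2}" using assms by auto
    then show ?thesis unfolding R_def by simp
  qed
  have summand: "q 0 (Suc i) * wt r (Suc i) l = (1 - r i) / (1 - r 0) * R" if "i \<in> {0..l-1}" for i
  proof (cases "i = 0")
    case True
    then show ?thesis unfolding wt_def using q_first R0 r0_bounds by simp
  next
    case False
    have "{0..i-1} = {0..<i}" using False by auto
    then have prod_wt: "(\<Prod>t\<in>{0..i-1}. r t) * wt r (Suc i) l = r 0 * R"
      unfolding wt_def R0[symmetric] using that by (simp add: prod.atLeastLessThan_concat)
    have "q 0 (Suc i) * wt r (Suc i) l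
        = (1 - r i) * ((\<Prod>t\<in>{0..i-1}. r t) * wt r (Suc i) l) / (r 0 * (1 - r 0))"
      using q_init[of "Suc i"] that False assms by simp
    also have "\<dots> = (1 - r i) * (r 0 * R) / (r 0 * (1 - r 0))"
      unfolding prod_wt ..
    finally show ?thesis using r0_bounds by simp
  qed
  have "mass r q 0 l = (\<Sum>i\<in>{Suc 0..Suc (l-1)}. q 0 i * wt r i l)"
    unfolding mass_def using assms by simp
  also have "\<dots> = (\<Sum>i\<in>{0..l-1}. q 0 (Suc i) * wt r (Suc i) l)"
    by (rule sum.shift_bounds_cl_Suc_ivl)
  also have "\<dots> = R * (\<Sum>i\<in>{0..l-1}. (1 - r i) / (1 - r 0))"
    unfolding sum_distrib_left by (rule sum.cong) (use summand in auto)
  finally show ?thesis unfolding R_def .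
qed

end

theorem proposition6:
  fixes L :: nat and r :: "nat \<Rightarrow> real" and Lr :: "nat \<Rightarrow> nat \<Rightarrow> real"
    and q :: "nat \<Rightarrow> nat \<Rightarrow> real"
  assumes "L \<ge> 1"
    and rho_bounds: "\<And>j. j < L \<Longrightarrow> 0 < r j \<and> r j < 1"
    and rho_last: "r L = 0"
    and Lr_pos: "\<And>k j. 1 \<le> k \<Longrightarrow> 1 \<le> j \<Longrightarrow> j \<le> L \<Longrightarrow> Lr k j > 0"
    and q_first: "\<And>k. q k 1 = 1 / r 0"
    and q_init: "\<And>l. 2 \<le> l \<Longrightarrow> l \<le> L + 1 \<Longrightarrow>
        q 0 l = (1 - r (l-1)) * (\<Prod>j\<in>{0..l-2}. r j) / (r 0 * (1 - r 0))"
    and q_rec: "\<And>k l. 1 \<le> k \<Longrightarrow> 2 \<le> l \<Longrightarrow> l \<le> L + 1 \<Longrightarrow>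
        q k l = (1 - r (l-1)) / (1 - r 0) * (\<Prod>j\<in>{1..l-1}. Lr k j)
                * (\<Sum>j\<in>{1..l}. q (k-1) j * wt r j l)"
    and "1 \<le> k" and "2 \<le> l" and "l \<le> L + 1"
  shows "q k l = alpha r k l * (\<Prod>j\<in>{1..l-1}. Lam Lr k j)
                 * (\<Prod>m\<in>{..<k-1}. 1 + zeta r Lr q m l)"
proof -
  interpret change_point_posterior L r Lr q
    by unfold_locales (use assms in auto)
  note kl = \<open>1 \<le> k\<close> \<open>2 \<le> l\<close> \<open>l \<le> L + 1\<close>
  have gain_pow: "gain r l ^ k = gain r l * gain r l ^ (k-1)"
    using kl by (simp add: power_eq_if)
  have lr_prods: "(\<Prod>M\<in>{1..k}. lr_prod Lr M l) = lr_prod Lr k l * (\<Prod>M\<in>{1..k-1}. lr_prod Lr M l)"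
  proof -
    have "{1..k} = insert k {1..k-1}" using kl by auto
    then show ?thesis using kl by simp
  qed
  have "q k l = gain r l * lr_prod Lr k l * mass r q (k-1) l"
    using q_rec_mass kl by blast
  also have "\<dots> = gain r l ^ k * mass r q 0 l * (\<Prod>M\<in>{1..k}. lr_prod Lr M l)
                   * (\<Prod>m<k-1. 1 + zeta r Lr q m l)"
    unfolding mass_telescope[OF kl(2,3), of "k-1"] gain_pow lr_prods by (simp add: mult_ac)
  also have "gain r l ^ k * mass r q 0 l = alpha r k l"
    unfolding alpha_def gain_def mass_initial[OF kl(2,3)] by simp
  also have "(\<Prod>M\<in>{1..k}. lr_prod Lr M l) = (\<Prod>j\<in>{1..l-1}. Lam Lr k j)"
    unfolding Lam_def lr_prod_def by (rule prod.swap)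
  finally show ?thesis .
qed

end
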